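(* Let $\mathcal{A}$ be an $(a,b)$-absorbing set in a Tanner graph with $b\geq 1$, and run the syndrome-based Gallager-B decoder on the absorbing set graph $\mathcal{G}_{\mathcal{A}}$ with error pattern $e=\vec{1}$, i.e. every variable node of $\mathcal{A}$ is in error. Then $\mathcal{A}$ is a failure inducing set for $\mathcal{G}_{\mathcal{A}}$. More precisely: - the input syndrome is $1$ exactly at the check nodes of $\mathcal{O}_{\mathcal{A}}$; - the estimated syndrome equals $\vec{0}$ at every iteration; - consequently the estimated syndrome never matches the input syndrome at the $b$ odd-degree check nodes.
   Context: Tanner graph: a bipartite graph $\mathcal{G}=(V,W;E)$ with variable nodes $V$ and check nodes $W$. Equivalently, a binary parity-check matrix $H$ with rows indexed by $W$ and columns by $V$, where $h_{c,v}=1$ iff $(v,c)\in E$. Notation for a subset $S\subseteq V$: - $\mathcal{N}(S)$ is the set of check nodes adjacent to some vertex of $S$. - $\mathcal{G}_S$ is the subgraph with vertex set $S\cup\mathcal{N}(S)$ and all edges of $\mathcal{G}$ between $S$ and $\mathcal{N}(S)$. - $\mathcal{O}_S$ (resp. $\mathcal{E}_S$) is the set of check nodes of $\mathcal{N}(S)$ having odd (resp. even) degree in $\mathcal{G}_S$. An $(a,b)$-absorbing set is a set $\mathcal{A}\subseteq V$ such that: - $|\mathcal{A}|=a$; - $|\mathcal{O}_{\mathcal{A}}|=b$; - every $v\in\mathcal{A}$ has strictly more neighbours in $\mathcal{E}_{\mathcal{A}}$ than in $\mathcal{O}_{\mathcal{A}}$. $\mathcal{G}_{\mathcal{A}}$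 is called the absorbing set graph and $H_{\mathcal{A}}$ denotes its parity-check matrix. Syndrome-based Gallager-B decoder on a Tanner graph $\mathcal{G}$: - An error pattern is $e\in\mathbb{F}_2^V$, the indicator of the variable nodes in error. Its input syndrome is $\sigma\in\mathbb{F}_2^W$ with $\sigma_c=\sum_{v\in\mathcal{N}(c)}e_v \bmod 2$. - Initially every variable node sends $0$ on every edge. - In each iteration, each check node $c$ sends to a neighbour $v$ the value $\sigma_c+\sum_{v'\in\mathcal{N}(c)\setminus\{v\}} m_{v'\to c} \pmod 2$, where the $m_{v'\to c}$ are the current variable-to-check messages. - Each variable node $v$ then sends to a neighbour $c$ the majority of the messages it received from its neighbours other than $c$. It sends $0$ on a tie, in particular when $v$ has no other neighbour. - The estimated error $\hat e_v$ is the majority of all incoming check-to-variable messages at $v$, and $0$ on a tie. - The estimated syndrome at $c$ is the mod-2 sum of the variable-to-check messages arriving at $c$. - Before any message passing, all messages are $0$, the estimated syndrome is $\vec 0$ and $\hat e=\vec 0$. - The decoder halts and outputs $\hat e$ as soon as the estimated syndrome equals $\sigma$; otherwise it iterates indefinitely. Decoding failure occurs if either: - the decoder never halts (the estimated syndrome is never eventually equal to $\sigma$, or the estimates fail to converge); or - it halts with $\hat e$ such that $e+\hat e$ is not in the $\mathbb{F}_2$-rowspace of the parity-check matrix of the graph being decoded on (a logical error). Halting with $e+\hat e$ in that rowspace is success (a degenerate error). A set $\mathcal{F}\subseteq V$ is a failure inducing set (for decoding on $\mathcal{G}$) if decoding with $e$ equal to the indicator of $\mathcal{F}$, all other variable nodes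 being correct, results in decoding failure. A nonempty $\mathcal{T}\subseteq V$ is a trapping set if some subset of $\mathcal{T}$ is failure inducing. *)

theory Defs
  imports Main
begin

text \<open>Binary values (elements of F_2) are
  represented by bool (True = 1); addition in F_2 is \<noteq> (xor).\<close>

definition tanner_graph :: "'v set \<Rightarrow> 'c set \<Rightarrow> ('v \<times> 'c) set \<Rightarrow> bool" where
  "tanner_graph V W E \<longleftrightarrow> finite V \<and> finite W \<and> E \<subseteq> V \<times> W"

definition nbr_chk :: "'c set \<Rightarrow> ('v \<times> 'c) set \<Rightarrow> 'v \<Rightarrow> 'c set" where
  "nbr_chk W E v = {c \<in> W. (v, c) \<in> E}"

definition nbr_var :: "'v set \<Rightarrow> ('v \<times> 'c) set \<Rightarrow> 'c \<Rightarrow> 'v set" where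
  "nbr_var V E c = {v \<in> V. (v, c) \<in> E}"

definition nbr_set :: "'c set \<Rightarrow> ('v \<times> 'c) set \<Rightarrow> 'v set \<Rightarrow> 'c set" where
  "nbr_set W E S = {c \<in> W. \<exists>v \<in> S. (v, c) \<in> E}"

definition parity :: "'a set \<Rightarrow> ('a \<Rightarrow> bool) \<Rightarrow> bool" where
  "parity S f \<longleftrightarrow> odd (card {x \<in> S. f x})"

definition maj :: "'a set \<Rightarrow> ('a \<Rightarrow> bool) \<Rightarrow> bool" where
  "maj S f \<longleftrightarrow> card {x \<in> S. \<not> f x} < card {x \<in> S. f x}"

definition odd_chks :: "'c set \<Rightarrow> ('v \<times> 'c) set \<Rightarrow> 'v set \<Rightarrow> 'c set" where
  "odd_chks W E S = {c \<in> nbr_set W E S. odd (card {v \<in> S. (v, c) \<in> E})}"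

definition even_chks :: "'c set \<Rightarrow> ('v \<times> 'c) set \<Rightarrow> 'v set \<Rightarrow> 'c set" where
  "even_chks W E S = {c \<in> nbr_set W E S. even (card {v \<in> S. (v, c) \<in> E})}"

definition absorbing_set :: "'v set \<Rightarrow> 'c set \<Rightarrow> ('v \<times> 'c) set \<Rightarrow> 'v set \<Rightarrow> nat \<Rightarrow> nat \<Rightarrow> bool" where
  "absorbing_set V W E A a b \<longleftrightarrow> A \<subseteq> V \<and> card A = a \<and> card (odd_chks W E A) = b \<and>
     (\<forall>v \<in> A. card {c \<in> odd_chks W E A. (v, c) \<in> E} < card {c \<in> even_chks W E A. (v, c) \<in> E})"

text \<open>Absorbing set graph G_A = (A, N(A); edges between A and N(A)).\<close>
definition sub_chks :: "'c set \<Rightarrow> ('v \<times> 'c) set \<Rightarrow> 'v set \<Rightarrow> 'c set" where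
  "sub_chks W E S = nbr_set W E S"

definition sub_edges :: "'c set \<Rightarrow> ('v \<times> 'c) set \<Rightarrow> 'v set \<Rightarrow> ('v \<times> 'c) set" where
  "sub_edges W E S = E \<inter> (S \<times> nbr_set W E S)"

definition syndrome :: "'v set \<Rightarrow> ('v \<times> 'c) set \<Rightarrow> ('v \<Rightarrow> bool) \<Rightarrow> 'c \<Rightarrow> bool" where
  "syndrome V E e c = parity (nbr_var V E c) e"

text \<open>Syndrome-based Gallager-B decoder.  gb_vc V W E \<sigma> t v c is the variable-to-check
  message from v to c after t iterations (all 0 for t = 0).\<close>
primrec gb_vc :: "'v set \<Rightarrow> 'c set \<Rightarrow> ('v \<times> 'c) set \<Rightarrow> ('c \<Rightarrow> bool) \<Rightarrow> nat \<Rightarrow> 'v \<Rightarrow> 'c \<Rightarrow> bool" where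
  "gb_vc V W E \<sigma> 0 v c = False"
| "gb_vc V W E \<sigma> (Suc t) v c =
     maj (nbr_chk W E v - {c})
       (\<lambda>c'. \<sigma> c' \<noteq> parity (nbr_var V E c' - {v}) (\<lambda>v'. gb_vc V W E \<sigma> t v' c'))"

text \<open>Check-to-variable message from c to v in iteration t+1.\<close>
definition gb_cv :: "'v set \<Rightarrow> 'c set \<Rightarrow> ('v \<times> 'c) set \<Rightarrow> ('c \<Rightarrow> bool) \<Rightarrow> nat \<Rightarrow> 'c \<Rightarrow> 'v \<Rightarrow> bool" where
  "gb_cv V W E \<sigma> t c v \<longleftrightarrow> \<sigma> c \<noteq> parity (nbr_var V E c - {v}) (\<lambda>v'. gb_vc V W E \<sigma> t v' c)"

definition gb_est :: "'v set \<Rightarrow> 'c set \<Rightarrow> ('v \<times> 'c) set \<Rightarrow> ('c \<Rightarrow> bool) \<Rightarrow> nat \<Rightarrow> 'v \<Rightarrow> bool" where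
  "gb_est V W E \<sigma> t v = (case t of 0 \<Rightarrow> False
      | Suc s \<Rightarrow> maj (nbr_chk W E v) (\<lambda>c. gb_cv V W E \<sigma> s c v))"

definition gb_syn :: "'v set \<Rightarrow> 'c set \<Rightarrow> ('v \<times> 'c) set \<Rightarrow> ('c \<Rightarrow> bool) \<Rightarrow> nat \<Rightarrow> 'c \<Rightarrow> bool" where
  "gb_syn V W E \<sigma> t c = parity (nbr_var V E c) (\<lambda>v. gb_vc V W E \<sigma> t v c)"

definition gb_halts_at :: "'v set \<Rightarrow> 'c set \<Rightarrow> ('v \<times> 'c) set \<Rightarrow> ('c \<Rightarrow> bool) \<Rightarrow> nat \<Rightarrow> bool" where
  "gb_halts_at V W E \<sigma> t \<longleftrightarrow> (\<forall>c \<in> W. gb_syn V W E \<sigma> t c = \<sigma> c)"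

definition in_rowspace :: "'v set \<Rightarrow> 'c set \<Rightarrow> ('v \<times> 'c) set \<Rightarrow> ('v \<Rightarrow> bool) \<Rightarrow> bool" where
  "in_rowspace V W E x \<longleftrightarrow> (\<exists>S \<subseteq> W. \<forall>v \<in> V. x v = parity S (\<lambda>c. (v, c) \<in> E))"

definition decoding_failure :: "'v set \<Rightarrow> 'c set \<Rightarrow> ('v \<times> 'c) set \<Rightarrow> ('v \<Rightarrow> bool) \<Rightarrow> bool" where
  "decoding_failure V W E e \<longleftrightarrow>
     (let \<sigma> = syndrome V E e in
       (\<forall>t. \<not> gb_halts_at V W E \<sigma> t) \<or>
       (\<exists>t. gb_halts_at V W E \<sigma> t \<and> (\<forall>s < t. \<not> gb_halts_at V W E \<sigma> s) \<and>
            \<not> in_rowspace V W E (\<lambda>v. e v \<noteq> gb_est V W E \<sigma> t v)))"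

definition failure_inducing :: "'v set \<Rightarrow> 'c set \<Rightarrow> ('v \<times> 'c) set \<Rightarrow> 'v set \<Rightarrow> bool" where
  "failure_inducing V W E F \<longleftrightarrow> F \<subseteq> V \<and> decoding_failure V W E (\<lambda>v. v \<in> F)"

end

theory Submission
  imports Defs
begin

text \<open>The absorbing condition gives every variable
  node strictly more even-degree (syndrome 0) than odd-degree neighbours, so even with the
  recipient check excluded, the majority of the check messages is 0 as long as all
  variable-to-check messages are 0. Hence the decoder never leaves its all-zero initial
  state: the estimated syndrome stays 0 and never matches the input syndrome on the
  b \<ge> 1 odd-degree checks.\<close>

lemma not_maj_Diff_singleton:
  assumes "finite S" and "card {x \<in> S. f x} < card {x \<in> S. \<not> f x}"
  shows "\<not> maj (S - {c}) f"
proof -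
  have "card {x \<in> S - {c}. f x} \<le> card {x \<in> S. f x}"
    using assms(1) by (intro card_mono) auto
  also have "\<dots> < card {x \<in> S. \<not> f x}"
    using assms(2) .
  also have "\<dots> \<le> Suc (card ({x \<in> S. \<not> f x} - {c}))"
    by (auto simp: card_Diff_singleton_if)
  also have "{x \<in> S. \<not> f x} - {c} = {x \<in> S - {c}. \<not> f x}"
    by auto
  finally show ?thesis
    by (simp add: maj_def)
qed

lemma finite_nbr_chk: "tanner_graph V W E \<Longrightarrow> finite (nbr_chk W E v)"
  by (simp add: tanner_graph_def nbr_chk_def)

lemma gb_vc_never_set:
  assumes "tanner_graph V W E"
    and majority_satisfied:
      "\<forall>v \<in> V. card {c \<in> nbr_chk W E v. \<sigma> c} < card {c \<in> nbr_chk W E v. \<not> \<sigma> c}"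
  shows "\<not> gb_vc V W E \<sigma> t v c"
proof (induction t arbitrary: v c)
  case 0
  then show ?case by simp
next
  case (Suc t)
  have silent: "\<not> parity S (\<lambda>v'. gb_vc V W E \<sigma> t v' c')" for S c'
    using Suc.IH by (simp add: parity_def)
  have "\<not> maj (nbr_chk W E v - {c}) \<sigma>"
  proof (cases "v \<in> V")
    case True
    show ?thesis
      using finite_nbr_chk[OF assms(1)] majority_satisfied True
      by (intro not_maj_Diff_singleton) auto
  next
    case False
    then have "nbr_chk W E v = {}"
      using assms(1) by (auto simp: tanner_graph_def nbr_chk_def)
    then show ?thesis by (simp add: maj_def)
  qed
  then show ?case
    by (simp add: silent)
qed

lemma gb_syn_never_set:
  assumes "tanner_graph V W E"
    and "\<forall>v \<in> V. card {c \<in> nbr_chk W E v. \<sigma> c} < card {c \<in> nbr_chk W E v. \<not> \<sigma> c}"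
  shows "\<not> gb_syn V W E \<sigma> t c"
  using gb_vc_never_set[OF assms] by (simp add: gb_syn_def parity_def)

lemma gb_never_halts:
  assumes "tanner_graph V W E"
    and "\<forall>v \<in> V. card {c \<in> nbr_chk W E v. \<sigma> c} < card {c \<in> nbr_chk W E v. \<not> \<sigma> c}"
    and "c \<in> W" and "\<sigma> c"
  shows "\<not> gb_halts_at V W E \<sigma> t"
  using gb_syn_never_set[OF assms(1,2)] assms(3,4) by (auto simp: gb_halts_at_def)

lemma tanner_graph_sub:
  assumes "tanner_graph V W E" and "A \<subseteq> V"
  shows "tanner_graph A (sub_chks W E A) (sub_edges W E A)"
  using assms by (auto simp: tanner_graph_def sub_chks_def sub_edges_def nbr_set_def
      intro: finite_subset)

lemma odd_chks_subset_sub_chks: "odd_chks W E A \<subseteq> sub_chks W E A"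
  by (auto simp: odd_chks_def sub_chks_def)

lemma syndrome_all_ones_sub:
  assumes "c \<in> sub_chks W E A"
  shows "syndrome A (sub_edges W E A) (\<lambda>v. v \<in> A) c \<longleftrightarrow> c \<in> odd_chks W E A"
proof -
  have "{x \<in> nbr_var A (sub_edges W E A) c. x \<in> A} = {v \<in> A. (v, c) \<in> E}"
    using assms by (auto simp: nbr_var_def sub_edges_def sub_chks_def)
  then show ?thesis
    using assms by (simp add: syndrome_def parity_def odd_chks_def sub_chks_def)
qed

lemma absorbing_set_majority_satisfied:
  assumes "absorbing_set V W E A a b"
  defines "\<sigma> \<equiv> syndrome A (sub_edges W E A) (\<lambda>v. v \<in> A)"
  shows "\<forall>v \<in> A. card {c \<in> nbr_chk (sub_chks W E A) (sub_edges W E A) v. \<sigma> c}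
                 < card {c \<in> nbr_chk (sub_chks W E A) (sub_edges W E A) v. \<not> \<sigma> c}"
proof
  fix v
  assume "v \<in> A"
  have unsatisfied: "{c \<in> nbr_chk (sub_chks W E A) (sub_edges W E A) v. \<sigma> c}
      = {c \<in> odd_chks W E A. (v, c) \<in> E}"
    using \<open>v \<in> A\<close> syndrome_all_ones_sub[of _ W E A]
    by (auto simp: \<sigma>_def nbr_chk_def sub_edges_def sub_chks_def odd_chks_def)
  have satisfied: "{c \<in> nbr_chk (sub_chks W E A) (sub_edges W E A) v. \<not> \<sigma> c}
      = {c \<in> even_chks W E A. (v, c) \<in> E}"
    using \<open>v \<in> A\<close> syndrome_all_ones_sub[of _ W E A]
    by (auto simp: \<sigma>_def nbr_chk_def sub_edges_def sub_chks_def odd_chks_def even_chks_def)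
  show "card {c \<in> nbr_chk (sub_chks W E A) (sub_edges W E A) v. \<sigma> c}
      < card {c \<in> nbr_chk (sub_chks W E A) (sub_edges W E A) v. \<not> \<sigma> c}"
    unfolding unsatisfied satisfied
    using assms(1) \<open>v \<in> A\<close> by (simp add: absorbing_set_def)
qed

theorem theorem1:
  fixes V :: "'v set" and W :: "'c set" and E :: "('v \<times> 'c) set"
    and A :: "'v set" and a b :: nat
  assumes "tanner_graph V W E"
    and "absorbing_set V W E A a b"
    and "b \<ge> 1"
  defines "WA \<equiv> sub_chks W E A" and "EA \<equiv> sub_edges W E A"
  shows "failure_inducing A WA EA A
    \<and> (\<forall>c \<in> WA. (syndrome A EA (\<lambda>v. v \<in> A)) c \<longleftrightarrow> c \<in> odd_chks W E A)
    \<and> (\<forall>t. \<forall>c \<in> WA. \<not> gb_syn A WA EA (syndrome A EA (\<lambda>v. v \<in> A)) t c)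
    \<and> (\<forall>t. \<forall>c \<in> odd_chks W E A. gb_syn A WA EA (syndrome A EA (\<lambda>v. v \<in> A)) t c \<noteq> (syndrome A EA (\<lambda>v. v \<in> A)) c)"
proof -
  define \<sigma> where "\<sigma> = syndrome A EA (\<lambda>v. v \<in> A)"
  have graph: "tanner_graph A WA EA"
    using tanner_graph_sub assms(1,2) by (auto simp: WA_def EA_def absorbing_set_def)
  have majority: "\<forall>v \<in> A. card {c \<in> nbr_chk WA EA v. \<sigma> c} < card {c \<in> nbr_chk WA EA v. \<not> \<sigma> c}"
    using absorbing_set_majority_satisfied[OF assms(2)] by (simp add: \<sigma>_def WA_def EA_def)
  have syndrome_odd: "\<forall>c \<in> WA. \<sigma> c \<longleftrightarrow> c \<in> odd_chks W E A"
    using syndrome_all_ones_sub[of _ W E A] by (simp add: \<sigma>_def WA_def EA_def)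
  obtain c0 where c0: "c0 \<in> odd_chks W E A"
    using assms(2,3) by (fastforce simp: absorbing_set_def)
  then have "c0 \<in> WA" and "\<sigma> c0"
    using odd_chks_subset_sub_chks[of W E A] syndrome_odd unfolding WA_def by auto
  then have "\<forall>t. \<not> gb_halts_at A WA EA \<sigma> t"
    using gb_never_halts[OF graph majority] by blast
  then have "failure_inducing A WA EA A"
    by (simp add: failure_inducing_def decoding_failure_def \<sigma>_def Let_def)
  moreover have syndrome_zero: "\<forall>t. \<forall>c \<in> WA. \<not> gb_syn A WA EA \<sigma> t c"
    using gb_syn_never_set[OF graph majority] by blast
  moreover have "\<forall>t. \<forall>c \<in> odd_chks W E A. gb_syn A WA EA \<sigma> t c \<noteq> \<sigma> c"
    using syndrome_zero syndrome_odd odd_chks_subset_sub_chks[of W E A] by (auto simp: WA_def)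
  ultimately show ?thesis
    using syndrome_odd by (simp add: \<sigma>_def)
qed

end
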